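(* Let $\tau>1$ and consider two candidates $P,Q$. Weighted Majority Rule 2 (defined in the context) has distortion at most $\max\big\{\frac{3\tau-1}{\tau+1},\frac{\tau+2}{\tau}\big\}$; i.e., if it selects $P$ then $SC(P)\le \max\{\frac{3\tau-1}{\tau+1},\frac{\tau+2}{\tau}\}\,SC(Q)$.
   Context: Voters $N=\{1,\dots,n\}$ and candidates are points of an arbitrary metric space $(X,d)$. Voter $i$ prefers $P$ to $Q$ only if $d(i,P)\le d(i,Q)$, with preference strength $\alpha_i^{PQ}=d(i,Q)/d(i,P)\ge1$. $SC(Y)=\sum_{i\in N}d(i,Y)$. For two candidates and threshold $\tau$, the information available is every voter's preferred candidate and whether its preference strength is $>\tau$ (strong) or $\le\tau$ (weak). Let $A_2,A_1$ be the voters preferring $P$ with strong, resp. weak, preference, and $B_2,B_1$ likewise for $Q$. Weighted Majority Rule 2: give weight $\frac{\tau+1}{\tau-1}$ to each strong voter and weight $1$ to each weak voter, and select $P$ if $\frac{\tau+1}{\tau-1}|A_2|+|A_1|\ge|B_1|+\frac{\tau+1}{\tau-1}|B_2|$, otherwise $Q$. *)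

theory Defs
  imports "HOL-Analysis.Analysis"
begin

text \<open>Voters are indexed by {1..n}; voter i is located at point vloc i of a metric space.
  prefP i = True means voter i prefers P (i.e. is counted on P's side), False means Q.\<close>

definition SC :: "(nat \<Rightarrow> 'a::metric_space) \<Rightarrow> nat \<Rightarrow> 'a \<Rightarrow> real" where
  "SC vloc n Y = (\<Sum>i\<in>{1..n}. dist (vloc i) Y)"

definition consistent_prefs :: "(nat \<Rightarrow> 'a::metric_space) \<Rightarrow> nat \<Rightarrow> (nat \<Rightarrow> bool) \<Rightarrow> 'a \<Rightarrow> 'a \<Rightarrow> bool" where
  "consistent_prefs vloc n prefP P Q \<longleftrightarrow>
     (\<forall>i\<in>{1..n}. (prefP i \<longrightarrow> dist (vloc i) P \<le> dist (vloc i) Q) \<and>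
                  (\<not> prefP i \<longrightarrow> dist (vloc i) Q \<le> dist (vloc i) P))"

text \<open>Preference strength d(v,Y)/d(v,X) of a voter at v preferring X over Y exceeds tau;
  written multiplicatively so that d(v,X)=0<d(v,Y) counts as infinite strength.\<close>
definition strong_pref :: "real \<Rightarrow> 'a::metric_space \<Rightarrow> 'a \<Rightarrow> 'a \<Rightarrow> bool" where
  "strong_pref \<tau> v X Y \<longleftrightarrow> dist v Y > \<tau> * dist v X"

definition A2 where "A2 \<tau> vloc n prefP P Q = {i\<in>{1..n}. prefP i \<and> strong_pref \<tau> (vloc i) P Q}"
definition A1 where "A1 \<tau> vloc n prefP P Q = {i\<in>{1..n}. prefP i \<and> \<not> strong_pref \<tau> (vloc i) P Q}"
definition B2 where "B2 \<tau> vloc n prefP P Q = {i\<in>{1..n}. \<not> prefP i \<and> strong_pref \<tau> (vloc i) Q P}"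
definition B1 where "B1 \<tau> vloc n prefP P Q = {i\<in>{1..n}. \<not> prefP i \<and> \<not> strong_pref \<tau> (vloc i) Q P}"

definition WMR2_selects_P :: "real \<Rightarrow> (nat \<Rightarrow> 'a::metric_space) \<Rightarrow> nat \<Rightarrow> (nat \<Rightarrow> bool) \<Rightarrow> 'a \<Rightarrow> 'a \<Rightarrow> bool" where
  "WMR2_selects_P \<tau> vloc n prefP P Q \<longleftrightarrow>
     (\<tau>+1)/(\<tau>-1) * real (card (A2 \<tau> vloc n prefP P Q)) + real (card (A1 \<tau> vloc n prefP P Q))
       \<ge> real (card (B1 \<tau> vloc n prefP P Q)) + (\<tau>+1)/(\<tau>-1) * real (card (B2 \<tau> vloc n prefP P Q))"

end

theory Submission
  imports Defs
begin

text \<open>Write \<open>D = d(P,Q)\<close>, \<open>l = (\<tau>-1)/(\<tau>+1)\<close> and \<open>c\<close> for the claimed distortion bound.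
  Each voter \<open>i\<close> satisfies \<open>d(i,P) - c\<cdot>d(i,Q) \<le> l D \<sigma>\<^sub>i\<close>, where the charge \<open>\<sigma>\<^sub>i\<close> is the
  voter's weight in Weighted Majority Rule 2, counted positively for \<open>Q\<close>-supporters and negatively
  for \<open>P\<close>-supporters: the two terms of the maximum in \<open>c\<close> are exactly what the strong and weak
  \<open>P\<close>-supporters need, and the triangle inequality handles everything else.
  Summing, \<open>SC(P) - c\<cdot>SC(Q)\<close> is at most \<open>l D\<close> times the weighted margin of \<open>Q\<close> over \<open>P\<close>,
  which is non-positive whenever the rule selects \<open>P\<close>.\<close>

lemma strong_P_voter_bound:
  fixes \<tau> c x y D :: real
  assumes "\<tau> > 1" "\<tau> * x < y" "D \<le> x + y" "(\<tau>+2)/\<tau> \<le> c" "0 \<le> x"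
  shows "x - c * y \<le> - D"
proof -
  have "0 \<le> y" using assms by (smt (verit) mult_nonneg_nonneg)
  with assms(4) have "(\<tau>+2)/\<tau> * y \<le> c * y" by (rule mult_right_mono)
  moreover have "(\<tau>+2)/\<tau> * y = y + 2 * (y/\<tau>)" using assms(1) by (simp add: field_simps)
  moreover have "x \<le> y/\<tau>" using assms(1,2) by (simp add: field_simps)
  ultimately show ?thesis using assms(3) by linarith
qed

lemma weak_P_voter_bound:
  fixes \<tau> c x y D :: real
  assumes "\<tau> > 1" "x \<le> y" "D \<le> x + y" "(3*\<tau>-1)/(\<tau>+1) \<le> c" "0 \<le> y"
  shows "x - c * y \<le> - ((\<tau>-1)/(\<tau>+1)) * D"
proof -
  define l where "l = (\<tau>-1)/(\<tau>+1)"
  have "l \<ge> 0" using assms(1) by (simp add: l_def)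
  have "(3*\<tau>-1)/(\<tau>+1) = 1 + 2*l" using assms(1) by (simp add: l_def field_simps)
  then have "(1 + 2*l) * y \<le> c * y" using assms(4,5) by (simp add: mult_right_mono)
  moreover have "l * D \<le> l * (x + y)" using assms(3) \<open>l \<ge> 0\<close> by (rule mult_left_mono)
  moreover have "(1 + l) * x \<le> (1 + l) * y" using \<open>l \<ge> 0\<close> assms(2) by (simp add: mult_left_mono)
  ultimately show ?thesis unfolding l_def[symmetric] by (simp add: algebra_simps)
qed

lemma weak_Q_voter_bound:
  fixes \<tau> c x y D :: real
  assumes "\<tau> > 1" "x \<le> \<tau> * y" "x \<le> y + D" "(3*\<tau>-1)/(\<tau>+1) \<le> c" "0 \<le> y"
  shows "x - c * y \<le> (\<tau>-1)/(\<tau>+1) * D"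
proof -
  have "(3*\<tau>-1)/(\<tau>+1) * y \<le> c * y" using assms(4,5) by (rule mult_right_mono)
  then have "(\<tau>+1) * (x - c * y) \<le> (\<tau>+1) * x - (3*\<tau>-1) * y"
    using assms(1) by (simp add: field_simps)
  also have "\<dots> \<le> (\<tau>-1) * D"
  proof -
    have "(\<tau>-1) * x \<le> (\<tau>-1) * (y + D)" using assms(1,3) by (simp add: mult_left_mono)
    then show ?thesis using assms(2) by (simp add: algebra_simps)
  qed
  finally show ?thesis using assms(1) by (simp add: field_simps)
qed

lemma strong_Q_voter_bound:
  fixes c x y D :: real
  assumes "x \<le> y + D" "1 \<le> c" "0 \<le> y"
  shows "x - c * y \<le> D"
  using assms mult_right_mono[OF assms(2,3)] by linarith

definition wmr2_charge ::
    "real \<Rightarrow> (nat \<Rightarrow> 'a::metric_space) \<Rightarrow> nat \<Rightarrow> (nat \<Rightarrow> bool) \<Rightarrow> 'a \<Rightarrow> 'a \<Rightarrow> nat \<Rightarrow> real" where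
  "wmr2_charge \<tau> vloc n prefP P Q i =
     (\<tau>+1)/(\<tau>-1) * (of_bool (i \<in> B2 \<tau> vloc n prefP P Q) - of_bool (i \<in> A2 \<tau> vloc n prefP P Q))
     + of_bool (i \<in> B1 \<tau> vloc n prefP P Q) - of_bool (i \<in> A1 \<tau> vloc n prefP P Q)"

lemma sum_wmr2_charge_nonpos:
  assumes "WMR2_selects_P \<tau> vloc n prefP P Q"
  shows "(\<Sum>i\<in>{1..n}. wmr2_charge \<tau> vloc n prefP P Q i) \<le> 0"
proof -
  define w where "w = (\<tau>+1)/(\<tau>-1)"
  have "A2 \<tau> vloc n prefP P Q \<subseteq> {1..n}" "A1 \<tau> vloc n prefP P Q \<subseteq> {1..n}"
      "B2 \<tau> vloc n prefP P Q \<subseteq> {1..n}" "B1 \<tau> vloc n prefP P Q \<subseteq> {1..n}"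
    by (auto simp: A1_def A2_def B1_def B2_def)
  then have "(\<Sum>i\<in>{1..n}. wmr2_charge \<tau> vloc n prefP P Q i)
      = w * (real (card (B2 \<tau> vloc n prefP P Q)) - real (card (A2 \<tau> vloc n prefP P Q)))
        + real (card (B1 \<tau> vloc n prefP P Q)) - real (card (A1 \<tau> vloc n prefP P Q))"
    unfolding wmr2_charge_def w_def[symmetric]
    by (simp add: sum.distrib sum_subtractf sum_distrib_left[symmetric] Int_absorb1)
  with assms show ?thesis
    by (simp add: WMR2_selects_P_def w_def[symmetric] right_diff_distrib)
qed

lemma voter_cost_le_charge:
  assumes "\<tau> > 1" "consistent_prefs vloc n prefP P Q" "i \<in> {1..n}"
    and c: "max ((3*\<tau>-1)/(\<tau>+1)) ((\<tau>+2)/\<tau>) \<le> c"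
  shows "dist (vloc i) P - c * dist (vloc i) Q
           \<le> (\<tau>-1)/(\<tau>+1) * dist P Q * wmr2_charge \<tau> vloc n prefP P Q i"
proof -
  define x where "x = dist (vloc i) P"
  define y where "y = dist (vloc i) Q"
  define D where "D = dist P Q"
  define l where "l = (\<tau>-1)/(\<tau>+1)"
  define w where "w = (\<tau>+1)/(\<tau>-1)"
  define \<sigma> where "\<sigma> = wmr2_charge \<tau> vloc n prefP P Q i"
  have "0 \<le> x" "0 \<le> y" by (simp_all add: x_def y_def)
  have PQ: "D \<le> x + y" and QP: "x \<le> y + D"
    unfolding x_def y_def D_def by (rule dist_triangle3, rule dist_triangle2)
  have c1: "(3*\<tau>-1)/(\<tau>+1) \<le> c" and c2: "(\<tau>+2)/\<tau> \<le> c" using c by simp_all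
  have "1 \<le> c" using c2 assms(1) by (smt (verit) le_divide_eq_1_pos)
  have lw: "l * w = 1" using assms(1) by (simp add: l_def w_def)
  have charge: "\<sigma> = w * (of_bool (i \<in> B2 \<tau> vloc n prefP P Q) - of_bool (i \<in> A2 \<tau> vloc n prefP P Q))
      + of_bool (i \<in> B1 \<tau> vloc n prefP P Q) - of_bool (i \<in> A1 \<tau> vloc n prefP P Q)"
    by (simp add: \<sigma>_def wmr2_charge_def w_def)
  consider "prefP i" "strong_pref \<tau> (vloc i) P Q" | "prefP i" "\<not> strong_pref \<tau> (vloc i) P Q"
    | "\<not> prefP i" "strong_pref \<tau> (vloc i) Q P" | "\<not> prefP i" "\<not> strong_pref \<tau> (vloc i) Q P"
    by blast
  then have "x - c * y \<le> l * D * \<sigma>"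
  proof cases
    case 1
    then have "\<sigma> = - w" using assms(3) by (simp add: charge A1_def A2_def B1_def B2_def)
    moreover have "\<tau> * x < y" using 1 by (simp add: strong_pref_def x_def y_def)
    ultimately show ?thesis
      using strong_P_voter_bound[OF assms(1) _ PQ c2 \<open>0 \<le> x\<close>] lw by (simp add: algebra_simps)
  next
    case 2
    then have "\<sigma> = - 1" using assms(3) by (simp add: charge A1_def A2_def B1_def B2_def)
    moreover have "x \<le> y" using 2 assms(2,3) by (simp add: consistent_prefs_def x_def y_def)
    ultimately show ?thesis
      using weak_P_voter_bound[OF assms(1) _ PQ c1 \<open>0 \<le> y\<close>] by (simp add: l_def)
  next
    case 3
    then have "\<sigma> = w" using assms(3) by (simp add: charge A1_def A2_def B1_def B2_def)
    then show ?thesis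
      using strong_Q_voter_bound[OF QP \<open>1 \<le> c\<close> \<open>0 \<le> y\<close>] lw by (simp add: algebra_simps)
  next
    case 4
    then have "\<sigma> = 1" using assms(3) by (simp add: charge A1_def A2_def B1_def B2_def)
    moreover have "x \<le> \<tau> * y" using 4 by (simp add: strong_pref_def x_def y_def)
    ultimately show ?thesis
      using weak_Q_voter_bound[OF assms(1) _ QP c1 \<open>0 \<le> y\<close>] by (simp add: l_def)
  qed
  then show ?thesis by (simp add: x_def y_def D_def l_def \<sigma>_def)
qed

theorem mainTheorem4:
  fixes vloc :: "nat \<Rightarrow> 'a::metric_space" and n :: nat and prefP :: "nat \<Rightarrow> bool"
    and P Q :: 'a and \<tau> :: real
  assumes "\<tau> > 1"
    and "consistent_prefs vloc n prefP P Q"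
    and "WMR2_selects_P \<tau> vloc n prefP P Q"
  shows "SC vloc n P \<le> max ((3*\<tau>-1)/(\<tau>+1)) ((\<tau>+2)/\<tau>) * SC vloc n Q"
proof -
  define c where "c = max ((3*\<tau>-1)/(\<tau>+1)) ((\<tau>+2)/\<tau>)"
  define lD where "lD = (\<tau>-1)/(\<tau>+1) * dist P Q"
  have "SC vloc n P - c * SC vloc n Q = (\<Sum>i\<in>{1..n}. dist (vloc i) P - c * dist (vloc i) Q)"
    by (simp add: SC_def sum_subtractf sum_distrib_left)
  also have "\<dots> \<le> (\<Sum>i\<in>{1..n}. lD * wmr2_charge \<tau> vloc n prefP P Q i)"
    using voter_cost_le_charge[OF assms(1,2)] by (intro sum_mono) (simp add: c_def lD_def)
  also have "\<dots> = lD * (\<Sum>i\<in>{1..n}. wmr2_charge \<tau> vloc n prefP P Q i)"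
    by (simp add: sum_distrib_left)
  also have "\<dots> \<le> 0"
    using assms(1) sum_wmr2_charge_nonpos[OF assms(3)]
    by (intro mult_nonneg_nonpos) (simp_all add: lD_def)
  finally show ?thesis by (simp add: c_def)
qed

end
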